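(* For every metric space $M$, $\dim_{\mathrm{MST}}(M)\le\dim_{\mathrm{Box}}(M)$. More precisely, if $\dim_{\mathrm{Box}}(M)<\beta<\infty$, then there is a constant $C<\infty$ such that $E_\beta(T)\le C$ for every minimal spanning tree $T$ on any finite set of distinct points of $M$.
   Context: A minimal spanning tree (MST) on a finite set of points in a metric space is a spanning tree of the complete graph on those points that minimizes the sum of the edge lengths; for an edge $e$, $\|e\|$ is the distance between its endpoints, and for a tree $T$ and $d\ge 0$, $E_d(T)=\sum_{e\in T}\|e\|^d$. The MST dimension is \[ \dim_{\mathrm{MST}}(M):=\inf\{d\ge 0:\ \exists C<\infty \text{ such that } E_d(T)\le C \text{ for every MST } T \text{ on any finite set of distinct points of } M\}, \] with $\inf\emptyset=\infty$. For $\epsilon>0$ let $N(\epsilon)\in\{0,1,2,\dots\}\cup\{\infty\}$ be the maximal number of pairwise disjoint open balls of radius $\epsilon$ centered at points of $M$. The upper box dimension is \[ \dim_{\mathrm{Box}}(M):=\limsup_{\epsilon\to0}\frac{\log N(\epsilon)}{\log(1/\epsilon)}. \] *)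

theory Defs
  imports "HOL-Analysis.Analysis" "HOL-Library.Extended_Nat"
begin

definition edge_graph :: "'a set \<Rightarrow> 'a set set \<Rightarrow> bool" where
  "edge_graph P T \<longleftrightarrow> (\<forall>e\<in>T. \<exists>x y. x \<in> P \<and> y \<in> P \<and> x \<noteq> y \<and> e = {x, y})"

definition graph_connected :: "'a set \<Rightarrow> 'a set set \<Rightarrow> bool" where
  "graph_connected P T \<longleftrightarrow>
     (\<forall>x\<in>P. \<forall>y\<in>P. (x, y) \<in> {(u, v). {u, v} \<in> T}\<^sup>*)"

text \<open>A spanning tree of the complete graph on P: a minimally connected spanning subgraph
  (equivalently, connected and acyclic).\<close>
definition spanning_tree :: "'a set \<Rightarrow> 'a set set \<Rightarrow> bool" where
  "spanning_tree P T \<longleftrightarrow> edge_graph P T \<and> graph_connected P T \<and>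
     (\<forall>e\<in>T. \<not> graph_connected P (T - {e}))"

text \<open>Length of an edge {x,y}: d x y (written as the max distance within the edge).\<close>
definition edge_len :: "('a \<Rightarrow> 'a \<Rightarrow> real) \<Rightarrow> 'a set \<Rightarrow> real" where
  "edge_len d e = Sup ((\<lambda>(x, y). d x y) ` (e \<times> e))"

definition tree_energy :: "('a \<Rightarrow> 'a \<Rightarrow> real) \<Rightarrow> real \<Rightarrow> 'a set set \<Rightarrow> real" where
  "tree_energy d \<beta> T = (\<Sum>e\<in>T. edge_len d e powr \<beta>)"

definition is_MST :: "'a set \<Rightarrow> ('a \<Rightarrow> 'a \<Rightarrow> real) \<Rightarrow> 'a set \<Rightarrow> 'a set set \<Rightarrow> bool" where
  "is_MST M d P T \<longleftrightarrow> finite P \<and> P \<subseteq> M \<and> spanning_tree P T \<and>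
     (\<forall>T'. spanning_tree P T' \<longrightarrow> (\<Sum>e\<in>T. edge_len d e) \<le> (\<Sum>e\<in>T'. edge_len d e))"

definition dim_MST :: "'a set \<Rightarrow> ('a \<Rightarrow> 'a \<Rightarrow> real) \<Rightarrow> ereal" where
  "dim_MST M d = Inf {ereal \<beta> | \<beta>. \<beta> \<ge> 0 \<and>
     (\<exists>C. \<forall>P T. is_MST M d P T \<longrightarrow> tree_energy d \<beta> T \<le> C)}"

definition packing_number :: "'a set \<Rightarrow> ('a \<Rightarrow> 'a \<Rightarrow> real) \<Rightarrow> real \<Rightarrow> enat" where
  "packing_number M d \<epsilon> = Sup {enat (card S) | S. finite S \<and> S \<subseteq> M \<and>
     pairwise (\<lambda>x y. disjnt (Metric_space.mball M d x \<epsilon>) (Metric_space.mball M d y \<epsilon>)) S}"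

text \<open>log N(\<epsilon>) / log(1/\<epsilon>) as an extended real (log \<infinity> = \<infinity>, log 0 = -\<infinity>).\<close>
definition box_ratio :: "'a set \<Rightarrow> ('a \<Rightarrow> 'a \<Rightarrow> real) \<Rightarrow> real \<Rightarrow> ereal" where
  "box_ratio M d \<epsilon> =
     (case packing_number M d \<epsilon> of
        \<infinity> \<Rightarrow> \<infinity>
      | enat n \<Rightarrow> (if n = 0 then - \<infinity> else ereal (ln (real n) / ln (1 / \<epsilon>))))"

definition dim_Box :: "'a set \<Rightarrow> ('a \<Rightarrow> 'a \<Rightarrow> real) \<Rightarrow> ereal" where
  "dim_Box M d = Limsup (at_right 0) (box_ratio M d)"

end

theory Submission
  imports Defs
begin

text \<open>Let T be a minimal spanning tree and \<epsilon> > 0. Deleting the k edges of T longer than \<epsilon>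
  leaves at least k + 1 components, and by the cycle property (exchanging such an edge for a
  shorter chord would decrease the weight) points in different components are more than \<epsilon>
  apart. Hence k + 1 is at most the packing number N(\<epsilon>/2), which is O(\<epsilon>^-\<alpha>) for every \<alpha>
  above the box dimension. Grouping the edges of length at most c into dyadic shells
  (c/2^(j+1), c/2^j] bounds their contribution to E_\<beta>(T) by a geometric series, convergent
  for \<beta> > \<alpha>; the boundedly many longer edges are at most diam M, which is finite because
  N(c/2) is.\<close>

definition adj :: "'a set set \<Rightarrow> ('a \<times> 'a) set" where
  "adj H = {(u, v). {u, v} \<in> H}"

lemma graph_connected_iff: "graph_connected P T \<longleftrightarrow> (\<forall>x\<in>P. \<forall>y\<in>P. (x, y) \<in> (adj T)\<^sup>*)"
  unfolding graph_connected_def adj_def ..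

lemma edge_in_rtrancl_adj: "{u, v} \<in> H \<Longrightarrow> (u, v) \<in> (adj H)\<^sup>*"
  unfolding adj_def by auto

lemma rtrancl_adj_sym: "(u, v) \<in> (adj H)\<^sup>* \<Longrightarrow> (v, u) \<in> (adj H)\<^sup>*"
proof -
  have "sym (adj H)"
    unfolding adj_def sym_def by (auto simp: insert_commute)
  then show "(u, v) \<in> (adj H)\<^sup>* \<Longrightarrow> (v, u) \<in> (adj H)\<^sup>*"
    by (meson sym_rtrancl symD)
qed

lemma rtrancl_adj_mono: "H \<subseteq> H' \<Longrightarrow> (adj H)\<^sup>* \<subseteq> (adj H')\<^sup>*"
  unfolding adj_def by (rule rtrancl_mono) auto

lemma rtrancl_adj_insert:
  assumes "(a, b) \<in> (adj H)\<^sup>*"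
  shows "(adj (insert {a, b} H))\<^sup>* = (adj H)\<^sup>*"
proof
  have "adj (insert {a, b} H) \<subseteq> (adj H)\<^sup>*"
    using assms rtrancl_adj_sym[OF assms] by (auto simp: adj_def doubleton_eq_iff)
  then show "(adj (insert {a, b} H))\<^sup>* \<subseteq> (adj H)\<^sup>*"
    by (rule rtrancl_subset_rtrancl)
qed (rule rtrancl_adj_mono, blast)

lemma rtrancl_adj_Diff_edge_cases:
  assumes "(u, w) \<in> (adj H)\<^sup>*"
  shows "(u, w) \<in> (adj (H - {{a, b}}))\<^sup>* \<or> (u, a) \<in> (adj (H - {{a, b}}))\<^sup>* \<or>
    (u, b) \<in> (adj (H - {{a, b}}))\<^sup>*"
  using assms
proof (induction rule: rtrancl_induct)
  case (step y z)
  show ?case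
  proof (cases "{y, z} = {a, b}")
    case True
    then have "y = a \<or> y = b"
      by (auto simp: doubleton_eq_iff)
    with step.IH show ?thesis
      by auto
  next
    case False
    with step.hyps(2) have "(y, z) \<in> adj (H - {{a, b}})"
      unfolding adj_def by auto
    with step.IH show ?thesis
      by (blast intro: rtrancl_into_rtrancl)
  qed
qed simp

lemma rtrancl_adj_reconnect:
  assumes "(u, v) \<in> (adj H)\<^sup>*" "(u, v) \<notin> (adj (H - {{a, b}}))\<^sup>*"
    and "H - {{a, b}} \<subseteq> G" "(u, v) \<in> (adj G)\<^sup>*"
  shows "(a, b) \<in> (adj G)\<^sup>*"
proof -
  let ?D = "(adj (H - {{a, b}}))\<^sup>*" and ?R = "(adj G)\<^sup>*"
  have "(v, u) \<notin> ?D"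
    using assms(2) rtrancl_adj_sym[of v u] by blast
  then have u: "(u, a) \<in> ?D \<or> (u, b) \<in> ?D" and v: "(v, a) \<in> ?D \<or> (v, b) \<in> ?D"
    using assms(2) rtrancl_adj_Diff_edge_cases[OF assms(1), of a b]
      rtrancl_adj_Diff_edge_cases[OF rtrancl_adj_sym[OF assms(1)], of a b] by blast+
  have "(u, v) \<in> ?D" if "(u, x) \<in> ?D" "(v, x) \<in> ?D" for x
    using rtrancl_trans[OF that(1) rtrancl_adj_sym[OF that(2)]] .
  with u v assms(2) have "(u, a) \<in> ?D \<and> (v, b) \<in> ?D \<or> (u, b) \<in> ?D \<and> (v, a) \<in> ?D"
    by meson
  moreover have "?D \<subseteq> ?R"
    using assms(3) by (rule rtrancl_adj_mono)
  ultimately show ?thesis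
  proof (elim disjE conjE)
    assume "(u, a) \<in> ?D" "(v, b) \<in> ?D"
    with \<open>?D \<subseteq> ?R\<close> have "(a, u) \<in> ?R" "(v, b) \<in> ?R"
      using rtrancl_adj_sym[of u a] by blast+
    then show ?thesis
      using rtrancl_trans[OF rtrancl_trans[OF _ assms(4)]] by simp
  next
    assume "(u, b) \<in> ?D" "(v, a) \<in> ?D"
    with \<open>?D \<subseteq> ?R\<close> have "(a, v) \<in> ?R" "(u, b) \<in> ?R"
      using rtrancl_adj_sym[of v a] by blast+
    then show ?thesis
      using rtrancl_trans[OF rtrancl_trans[OF _ rtrancl_adj_sym[OF assms(4)]]] by simp
  qed
qed

lemma rtrancl_adj_exchange:
  assumes "(u, v) \<in> (adj H)\<^sup>*" "(u, v) \<notin> (adj (H - {{a, b}}))\<^sup>*"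
  shows "(adj H)\<^sup>* \<subseteq> (adj (insert {u, v} (H - {{a, b}})))\<^sup>*"
proof -
  let ?H' = "insert {u, v} (H - {{a, b}})"
  have "(a, b) \<in> (adj ?H')\<^sup>*"
    by (rule rtrancl_adj_reconnect[OF assms subset_insertI], rule edge_in_rtrancl_adj) simp
  have "(adj H)\<^sup>* \<subseteq> (adj (insert {a, b} ?H'))\<^sup>*"
    by (rule rtrancl_adj_mono) blast
  also have "\<dots> = (adj ?H')\<^sup>*"
    using rtrancl_adj_insert[OF \<open>(a, b) \<in> (adj ?H')\<^sup>*\<close>] .
  finally show ?thesis .
qed

lemma spanning_tree_finite: "finite P \<Longrightarrow> spanning_tree P T \<Longrightarrow> finite T"
  unfolding spanning_tree_def edge_graph_def by (rule finite_subset[of T "Pow P"]) auto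

lemma spanning_tree_edge:
  assumes "spanning_tree P T" "f \<in> T"
  obtains a b where "f = {a, b}" "a \<in> P" "b \<in> P" "a \<noteq> b"
  using assms unfolding spanning_tree_def edge_graph_def by blast

lemma spanning_tree_bridge:
  assumes "spanning_tree P T" "{a, b} \<in> T"
  shows "(a, b) \<notin> (adj (T - {{a, b}}))\<^sup>*"
proof
  assume "(a, b) \<in> (adj (T - {{a, b}}))\<^sup>*"
  then have "(adj T)\<^sup>* = (adj (T - {{a, b}}))\<^sup>*"
    using rtrancl_adj_insert[of a b "T - {{a, b}}"] insert_Diff[OF assms(2)] by simp
  with assms(1) have "graph_connected P (T - {{a, b}})"
    unfolding spanning_tree_def graph_connected_iff by simp
  with assms show False
    unfolding spanning_tree_def by blast
qed

lemma spanning_tree_separating_edge: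
  assumes "spanning_tree P T" "finite L" "L \<subseteq> T"
    and "(u, v) \<in> (adj T)\<^sup>*" "(u, v) \<notin> (adj (T - L))\<^sup>*"
  shows "\<exists>f\<in>L. (u, v) \<notin> (adj (T - {f}))\<^sup>*"
  using assms(2,3,5)
proof (induction L rule: finite_induct)
  case empty
  with assms(4) show ?case
    by simp
next
  case (insert f L)
  show ?case
  proof (cases "(u, v) \<in> (adj (T - L))\<^sup>*")
    case True
    have "f \<in> T"
      using insert.prems(1) by simp
    then obtain a b where f: "f = {a, b}"
      using spanning_tree_edge[OF assms(1)] by metis
    have "T - insert f L = T - L - {{a, b}}"
      using f by blast
    with insert.prems(2) have "(u, v) \<notin> (adj (T - L - {{a, b}}))\<^sup>*"
      by simp
    moreover have "(a, b) \<notin> (adj (T - {{a, b}}))\<^sup>*"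
      using spanning_tree_bridge[OF assms(1)] insert.prems(1) f by simp
    ultimately have "(u, v) \<notin> (adj (T - {f}))\<^sup>*"
      using rtrancl_adj_reconnect[OF True, where G = "T - {{a, b}}"] f by blast
    then show ?thesis
      by blast
  next
    case False
    with insert show ?thesis
      by blast
  qed
qed

lemma ex_spanning_tree_subset:
  assumes "finite G" "edge_graph P G" "graph_connected P G"
  obtains T where "T \<subseteq> G" "spanning_tree P T"
proof -
  obtain H where H: "H \<subseteq> G" "graph_connected P H"
    and min: "\<And>H'. H' \<subseteq> G \<Longrightarrow> graph_connected P H' \<Longrightarrow> card H \<le> card H'"
    using ex_has_least_nat[of "\<lambda>H. H \<subseteq> G \<and> graph_connected P H" G card] assms(3) by blast
  have "\<not> graph_connected P (H - {e})" if "e \<in> H" for e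
    using min[of "H - {e}"] H(1) card_Diff1_less[OF finite_subset[OF H(1) assms(1)] that] by auto
  moreover have "edge_graph P H"
    using H(1) assms(2) unfolding edge_graph_def by blast
  ultimately show ?thesis
    using that H unfolding spanning_tree_def by blast
qed

definition conn_rel :: "'a set \<Rightarrow> 'a set set \<Rightarrow> ('a \<times> 'a) set" where
  "conn_rel P H = (P \<times> P) \<inter> (adj H)\<^sup>*"

lemma equiv_conn_rel: "equiv P (conn_rel P H)"
proof (rule equivI)
  show "sym (conn_rel P H)"
    by (rule symI) (auto simp: conn_rel_def dest: rtrancl_adj_sym)
  show "trans (conn_rel P H)"
    by (rule transI) (auto simp: conn_rel_def dest: rtrancl_trans)
qed (auto simp: conn_rel_def refl_on_def)

lemma conn_rel_mono: "H \<subseteq> H' \<Longrightarrow> conn_rel P H \<subseteq> conn_rel P H'"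
  unfolding conn_rel_def using rtrancl_adj_mono by blast

lemma card_quotient_less_if_refines:
  assumes "finite A" "equiv A R" "equiv A S" "R \<subseteq> S" "(x, y) \<in> S" "(x, y) \<notin> R"
  shows "card (A // S) < card (A // R)"
proof -
  let ?f = "\<lambda>X. S``X"
  have x: "x \<in> A" and y: "y \<in> A"
    using assms(3,5) equiv_class_eq_iff by fast+
  have "R``{x} \<noteq> R``{y}"
    using eq_equiv_class_iff[OF assms(2) x y] assms(6) by simp
  moreover have "?f (R``{x}) = ?f (R``{y})"
    using refines_equiv_class_eq2[OF assms(4,2,3)] equiv_class_eq_iff[OF assms(3)] assms(5) by simp
  ultimately have "\<not> inj_on ?f (A // R)"
    by (meson inj_onD quotientI x y)
  moreover have "finite (A // R)"
    using finite_quotient[OF assms(1) equiv_type[OF assms(2)]] .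
  ultimately have "card (?f ` (A // R)) \<noteq> card (A // R)"
    by (simp add: inj_on_iff_eq_card)
  moreover have "card (?f ` (A // R)) \<le> card (A // R)"
    using \<open>finite (A // R)\<close> by (rule card_image_le)
  ultimately show ?thesis
    using refines_equiv_image_eq[OF assms(4,2,3)] by simp
qed

lemma card_quotient_spanning_tree_Diff:
  assumes "finite P" "P \<noteq> {}" "spanning_tree P T" "D \<subseteq> T"
  shows "card D < card (P // conn_rel P (T - D))"
proof -
  have "finite D"
    using finite_subset[OF assms(4) spanning_tree_finite[OF assms(1,3)]] .
  then show ?thesis
    using assms(4)
  proof (induction D rule: finite_induct)
    case empty
    show ?case
      using finite_quotient[OF assms(1) equiv_type[OF equiv_conn_rel]] assms(2)
      by (simp add: card_gt_0_iff)
  next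
    case (insert f D)
    have "f \<in> T"
      using insert.prems by simp
    then obtain a b where f: "f = {a, b}" "a \<in> P" "b \<in> P"
      using spanning_tree_edge[OF assms(3)] by metis
    have "f \<in> T - D"
      using \<open>f \<in> T\<close> insert.hyps(2) by simp
    then have "(a, b) \<in> conn_rel P (T - D)"
      using edge_in_rtrancl_adj[of a b] f unfolding conn_rel_def by simp
    moreover have "(a, b) \<notin> (adj (T - {f}))\<^sup>*"
      using spanning_tree_bridge[OF assms(3)] \<open>f \<in> T\<close> f(1) by simp
    then have "(a, b) \<notin> conn_rel P (T - insert f D)"
      using rtrancl_adj_mono[of "T - insert f D" "T - {f}"] unfolding conn_rel_def by blast
    ultimately have "card (P // conn_rel P (T - D)) < card (P // conn_rel P (T - insert f D))"
      using card_quotient_less_if_refines[OF assms(1) equiv_conn_rel equiv_conn_rel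
          conn_rel_mono[of "T - insert f D" "T - D"]] by blast
    with insert show ?case
      by simp
  qed
qed

lemma ex_quotient_representatives:
  assumes "equiv A R"
  obtains S where "S \<subseteq> A" "card S = card (A // R)" "pairwise (\<lambda>x y. (x, y) \<notin> R) S"
proof -
  have "A // R \<subseteq> (\<lambda>x. R``{x}) ` A"
    unfolding quotient_def by blast
  then obtain S where S: "S \<subseteq> A" "inj_on (\<lambda>x. R``{x}) S" "A // R = (\<lambda>x. R``{x}) ` S"
    unfolding subset_image_inj by blast
  have "pairwise (\<lambda>x y. (x, y) \<notin> R) S"
    using S(1,2) assms unfolding pairwise_def inj_on_def by (meson equiv_class_eq_iff)
  with S show ?thesis
    using that card_image by metis
qed

lemma spanning_tree_Diff_separated:
  assumes "finite P" "P \<noteq> {}" "spanning_tree P T" "D \<subseteq> T"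
  obtains S where "S \<subseteq> P" "card D < card S" "pairwise (\<lambda>x y. (x, y) \<notin> (adj (T - D))\<^sup>*) S"
proof -
  obtain S where S: "S \<subseteq> P" "card S = card (P // conn_rel P (T - D))"
    "pairwise (\<lambda>x y. (x, y) \<notin> conn_rel P (T - D)) S"
    using ex_quotient_representatives[OF equiv_conn_rel] by blast
  have "pairwise (\<lambda>x y. (x, y) \<notin> (adj (T - D))\<^sup>*) S"
    using S(1,3) unfolding pairwise_def conn_rel_def by blast
  with S(1,2) card_quotient_spanning_tree_Diff[OF assms] that show ?thesis
    by simp
qed

lemma dyadic_scale:
  fixes x c :: real
  assumes "0 < x" "x \<le> c"
  shows "\<exists>j::nat. c / 2 ^ Suc j < x \<and> x \<le> c / 2 ^ j"
proof -
  obtain n :: nat where "c / x < 2 ^ n"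
    using real_arch_pow[of 2 "c / x"] by auto
  then have ex: "c / 2 ^ n < x"
    using assms(1) by (simp add: field_simps)
  define m where "m = (LEAST n. c / 2 ^ n < x)"
  have m: "c / 2 ^ m < x"
    unfolding m_def using ex by (rule LeastI)
  have "m \<noteq> 0"
  proof
    assume "m = 0"
    with m assms(2) show False
      by simp
  qed
  then obtain j where j: "m = Suc j"
    using not0_implies_Suc by blast
  have "\<not> c / 2 ^ j < x"
    using not_less_Least[of j "\<lambda>n. c / 2 ^ n < x"] j unfolding m_def by simp
  with m j show ?thesis
    by auto
qed

lemma dyadic_term_eq:
  fixes c \<alpha> \<beta> A :: real
  assumes "0 < c"
  shows "A * (c / 2 ^ Suc k) powr (- \<alpha>) * (c / 2 ^ k) powr \<beta> =
    A * 2 powr \<alpha> * c powr (\<beta> - \<alpha>) * (2 powr (\<alpha> - \<beta>)) ^ k"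
  using assms
  by (simp add: powr_divide powr_minus_divide powr_diff powr_add powr_realpow[symmetric] powr_powr
      powr_mult mult_ac)

lemma sum_geometric_le:
  fixes q :: real
  assumes "0 \<le> q" "q < 1"
  shows "(\<Sum>k<n. q ^ k) \<le> 1 / (1 - q)"
  using assms by (simp add: sum_gp_strict divide_right_mono)

lemma dyadic_sum_powr_le:
  fixes len :: "'e \<Rightarrow> real"
  assumes E: "finite E" "\<And>e. e \<in> E \<Longrightarrow> 0 < len e \<and> len e \<le> c"
    and exps: "0 \<le> \<alpha>" "\<alpha> < \<beta>"
    and count: "\<And>\<epsilon>. 0 < \<epsilon> \<Longrightarrow> \<epsilon> \<le> c \<Longrightarrow> real (card {e\<in>E. \<epsilon> < len e}) \<le> A * \<epsilon> powr (- \<alpha>)"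
    and c: "0 < c"
  shows "(\<Sum>e\<in>E. len e powr \<beta>) \<le> A * 2 powr \<alpha> * c powr (\<beta> - \<alpha>) / (1 - 2 powr (\<alpha> - \<beta>))"
proof -
  have "\<forall>e\<in>E. \<exists>k. c / 2 ^ Suc k < len e \<and> len e \<le> c / 2 ^ k"
    using E(2) dyadic_scale by blast
  from bchoice[OF this] obtain j
    where j: "\<And>e. e \<in> E \<Longrightarrow> c / 2 ^ Suc (j e) < len e \<and> len e \<le> c / 2 ^ j e"
    by blast
  define J where "J = Suc (Max (j ` E))"
  have jJ: "j ` E \<subseteq> {..<J}"
    unfolding J_def using E(1) by (auto simp: less_Suc_eq_le)
  define q :: real where "q = 2 powr (\<alpha> - \<beta>)"
  define K where "K = A * 2 powr \<alpha> * c powr (\<beta> - \<alpha>)"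
  have "0 \<le> A * c powr (- \<alpha>)"
    using count[of c] c by (smt (verit) of_nat_0_le_iff)
  then have "0 \<le> A"
    using c by (simp add: zero_le_mult_iff)
  have "(\<Sum>e\<in>E. len e powr \<beta>) \<le> (\<Sum>e\<in>E. (c / 2 ^ j e) powr \<beta>)"
    using exps by (intro sum_mono powr_mono2) (auto dest: E(2) j)
  also have "\<dots> = (\<Sum>k<J. \<Sum>e\<in>{e\<in>E. j e = k}. (c / 2 ^ k) powr \<beta>)"
    using sum.group[OF E(1) finite_lessThan jJ, of "\<lambda>e. (c / 2 ^ j e) powr \<beta>"] by simp
  also have "\<dots> = (\<Sum>k<J. real (card {e\<in>E. j e = k}) * (c / 2 ^ k) powr \<beta>)"
    by simp
  also have "\<dots> \<le> (\<Sum>k<J. A * (c / 2 ^ Suc k) powr (- \<alpha>) * (c / 2 ^ k) powr \<beta>)"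
  proof (intro sum_mono mult_right_mono)
    fix k
    have "{e\<in>E. j e = k} \<subseteq> {e\<in>E. c / 2 ^ Suc k < len e}"
      using j by auto
    then have "card {e\<in>E. j e = k} \<le> card {e\<in>E. c / 2 ^ Suc k < len e}"
      using E(1) by (intro card_mono) auto
    also have "real \<dots> \<le> A * (c / 2 ^ Suc k) powr (- \<alpha>)"
      using c one_le_power[of "2::real" "Suc k"] by (intro count) (auto simp: field_simps)
    finally show "real (card {e\<in>E. j e = k}) \<le> A * (c / 2 ^ Suc k) powr (- \<alpha>)"
      by simp
  qed simp
  also have "\<dots> = K * (\<Sum>k<J. q ^ k)"
    unfolding K_def q_def sum_distrib_left dyadic_term_eq[OF c] ..
  also have "\<dots> \<le> K * (1 / (1 - q))"
    using exps \<open>0 \<le> A\<close> unfolding K_def q_def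
    by (intro mult_left_mono sum_geometric_le powr_less_one) auto
  finally show ?thesis
    unfolding K_def q_def by simp
qed

lemma sum_powr_le_of_counting_bound:
  fixes len :: "'e \<Rightarrow> real"
  assumes E: "finite E" "\<And>e. e \<in> E \<Longrightarrow> 0 < len e \<and> len e \<le> B"
    and exps: "0 \<le> \<alpha>" "\<alpha> < \<beta>"
    and count: "\<And>\<epsilon>. 0 < \<epsilon> \<Longrightarrow> \<epsilon> \<le> c \<Longrightarrow> real (card {e\<in>E. \<epsilon> < len e}) \<le> A * \<epsilon> powr (- \<alpha>)"
    and c: "0 < c"
  shows "(\<Sum>e\<in>E. len e powr \<beta>) \<le>
    A * c powr (- \<alpha>) * B powr \<beta> + A * 2 powr \<alpha> * c powr (\<beta> - \<alpha>) / (1 - 2 powr (\<alpha> - \<beta>))"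
proof -
  let ?long = "{e\<in>E. c < len e}"
  have "(\<Sum>e\<in>?long. len e powr \<beta>) \<le> real (card ?long) * B powr \<beta>"
    using exps by (intro sum_bounded_above powr_mono2) (auto dest: E(2))
  also have "\<dots> \<le> A * c powr (- \<alpha>) * B powr \<beta>"
    using count[OF c order_refl] by (intro mult_right_mono) auto
  finally have long: "(\<Sum>e\<in>?long. len e powr \<beta>) \<le> A * c powr (- \<alpha>) * B powr \<beta>" .
  have "real (card {e\<in>E - ?long. \<epsilon> < len e}) \<le> A * \<epsilon> powr (- \<alpha>)"
    if "0 < \<epsilon>" "\<epsilon> \<le> c" for \<epsilon>
  proof -
    have "card {e\<in>E - ?long. \<epsilon> < len e} \<le> card {e\<in>E. \<epsilon> < len e}"
      using E(1) by (intro card_mono) auto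
    with count[OF that] show ?thesis
      by linarith
  qed
  then have short: "(\<Sum>e\<in>E - ?long. len e powr \<beta>) \<le>
      A * 2 powr \<alpha> * c powr (\<beta> - \<alpha>) / (1 - 2 powr (\<alpha> - \<beta>))"
    using E exps c by (intro dyadic_sum_powr_le) auto
  have "(\<Sum>e\<in>E. len e powr \<beta>) = (\<Sum>e\<in>E - ?long. len e powr \<beta>) + (\<Sum>e\<in>?long. len e powr \<beta>)"
    using E(1) by (intro sum.subset_diff) auto
  with long short show ?thesis
    by linarith
qed

lemma le_powr_if_box_ratio_less:
  assumes "0 < r" "r < 1" "box_ratio M d r < ereal \<alpha>" "enat k \<le> packing_number M d r"
  shows "real k \<le> r powr (- \<alpha>)"
proof (cases "packing_number M d r")
  case (enat n)
  show ?thesis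
  proof (cases "n = 0")
    case False
    have "0 < ln (1 / r)"
      using assms(1,2) by simp
    with assms(3) enat False have "ln (real n) < \<alpha> * ln (1 / r)"
      unfolding box_ratio_def by (simp add: divide_less_eq)
    then have "real n < exp (\<alpha> * ln (1 / r))"
      using False by (metis exp_less_cancel_iff exp_ln of_nat_0_less_iff not_gr0)
    also have "\<dots> = r powr (- \<alpha>)"
      using assms(1) by (simp add: powr_def ln_div)
    finally show ?thesis
      using assms(4) enat by simp
  qed (use assms(4) enat in simp)
qed (use assms(3) in \<open>simp add: box_ratio_def\<close>)

context Metric_space
begin

lemma edge_len_doubleton:
  assumes "x \<in> M" "y \<in> M"
  shows "edge_len d {x, y} = d x y"
proof -
  have "(\<lambda>(u, v). d u v) ` ({x, y} \<times> {x, y}) = {0, d x y}"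
    using assms commute[of y x] by auto
  then show ?thesis
    unfolding edge_len_def by (simp only:) (rule cSup_eq_maximum, auto)
qed

lemma edge_len_pos:
  assumes "P \<subseteq> M" "edge_graph P T" "e \<in> T"
  shows "0 < edge_len d e"
proof -
  obtain x y where xy: "e = {x, y}" "x \<in> M" "y \<in> M" "x \<noteq> y"
    using assms unfolding edge_graph_def by blast
  then have "edge_len d e = d x y"
    using edge_len_doubleton by simp
  moreover have "d x y \<noteq> 0"
    using zero[OF xy(2,3)] xy(4) by simp
  ultimately show ?thesis
    using nonneg[of x y] by linarith
qed

lemma MST_cycle_property:
  assumes "is_MST M d P T" "f \<in> T" "s \<in> P" "t \<in> P" "(s, t) \<notin> (adj (T - {f}))\<^sup>*"
  shows "edge_len d f \<le> d s t"
proof -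
  have P: "finite P" "P \<subseteq> M" and st: "spanning_tree P T"
    and min: "\<And>T'. spanning_tree P T' \<Longrightarrow> (\<Sum>e\<in>T. edge_len d e) \<le> (\<Sum>e\<in>T'. edge_len d e)"
    using assms(1) unfolding is_MST_def by auto
  have "finite T"
    using spanning_tree_finite[OF P(1) st] .
  obtain a b where f: "f = {a, b}"
    using spanning_tree_edge[OF st assms(2)] by metis
  define T' where "T' = insert {s, t} (T - {f})"
  have "finite T'"
    unfolding T'_def using \<open>finite T\<close> by simp
  moreover have "edge_graph P T'"
    using st assms(3-5) unfolding spanning_tree_def edge_graph_def T'_def by auto
  moreover have "graph_connected P T'"
  proof -
    have "(s, t) \<in> (adj T)\<^sup>*"
      using st assms(3,4) unfolding spanning_tree_def graph_connected_iff by blast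
    then have "(adj T)\<^sup>* \<subseteq> (adj T')\<^sup>*"
      using rtrancl_adj_exchange[of s t T a b] assms(5) f unfolding T'_def by simp
    with st show ?thesis
      unfolding spanning_tree_def graph_connected_iff by blast
  qed
  ultimately obtain T'' where T'': "T'' \<subseteq> T'" "spanning_tree P T''"
    by (rule ex_spanning_tree_subset)
  have nonneg: "0 \<le> edge_len d e" if "e \<in> T'" for e
    using edge_len_pos[OF P(2) \<open>edge_graph P T'\<close> that] by simp
  have "edge_len d {s, t} = d s t"
    using edge_len_doubleton P(2) assms(3,4) by auto
  have "(\<Sum>e\<in>T. edge_len d e) \<le> (\<Sum>e\<in>T''. edge_len d e)"
    using min[OF T''(2)] .
  also have "\<dots> \<le> (\<Sum>e\<in>T'. edge_len d e)"
    using \<open>finite T'\<close> T''(1) nonneg by (intro sum_mono2) auto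
  also have "\<dots> \<le> d s t + (\<Sum>e\<in>T - {f}. edge_len d e)"
    using nonneg[of "{s, t}"] \<open>finite T\<close> \<open>edge_len d {s, t} = d s t\<close>
    unfolding T'_def by (simp add: sum.insert_if)
  also have "\<dots> = d s t + (\<Sum>e\<in>T. edge_len d e) - edge_len d f"
    using \<open>finite T\<close> assms(2) by (simp add: sum_diff1)
  finally show ?thesis
    by simp
qed

lemma MST_long_edges_separated:
  assumes "is_MST M d P T" "P \<noteq> {}"
  obtains S where "S \<subseteq> P" "card {e\<in>T. \<epsilon> < edge_len d e} < card S" "pairwise (\<lambda>s t. \<epsilon> < d s t) S"
proof -
  let ?L = "{e\<in>T. \<epsilon> < edge_len d e}"
  have P: "finite P" and st: "spanning_tree P T"
    using assms(1) unfolding is_MST_def by auto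
  have L: "finite ?L" "?L \<subseteq> T"
    using spanning_tree_finite[OF P st] by auto
  obtain S where S: "S \<subseteq> P" "card ?L < card S" "pairwise (\<lambda>x y. (x, y) \<notin> (adj (T - ?L))\<^sup>*) S"
    by (rule spanning_tree_Diff_separated[OF P assms(2) st L(2)])
  have "\<epsilon> < d s t" if "s \<in> S" "t \<in> S" "s \<noteq> t" for s t
  proof -
    have "s \<in> P" "t \<in> P"
      using S(1) that by auto
    then have "(s, t) \<in> (adj T)\<^sup>*"
      using st unfolding spanning_tree_def graph_connected_iff by blast
    moreover have "(s, t) \<notin> (adj (T - ?L))\<^sup>*"
      using S(3) that unfolding pairwise_def by blast
    ultimately have "\<exists>f\<in>?L. (s, t) \<notin> (adj (T - {f}))\<^sup>*"
      by (rule spanning_tree_separating_edge[OF st L])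
    then obtain f where f: "f \<in> ?L" "(s, t) \<notin> (adj (T - {f}))\<^sup>*"
      by blast
    then have "edge_len d f \<le> d s t"
      by (intro MST_cycle_property[OF assms(1) _ \<open>s \<in> P\<close> \<open>t \<in> P\<close>]) simp_all
    with f(1) show ?thesis
      by simp
  qed
  then have "pairwise (\<lambda>s t. \<epsilon> < d s t) S"
    unfolding pairwise_def by blast
  with S(1,2) show ?thesis
    by (rule that)
qed

lemma card_le_packing_number_if_separated:
  assumes "finite S" "S \<subseteq> M" "pairwise (\<lambda>x y. 2 * r \<le> d x y) S"
  shows "enat (card S) \<le> packing_number M d r"
proof -
  have "pairwise (\<lambda>x y. disjnt (mball x r) (mball y r)) S"
    using assms(3) disjoint_mball by (rule pairwise_mono) auto
  with assms(1,2) show ?thesis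
    unfolding packing_number_def by (intro Sup_upper) blast
qed

lemma card_MST_long_edges_le_packing_number:
  assumes "is_MST M d P T"
  shows "enat (card {e\<in>T. \<epsilon> < edge_len d e}) \<le> packing_number M d (\<epsilon> / 2)"
proof (cases "P = {}")
  case True
  with assms have "T = {}"
    unfolding is_MST_def spanning_tree_def edge_graph_def by blast
  then show ?thesis
    using zero_le by (simp add: zero_enat_def[symmetric])
next
  case False
  have P: "finite P" "P \<subseteq> M"
    using assms unfolding is_MST_def by auto
  obtain S where S: "S \<subseteq> P" "card {e\<in>T. \<epsilon> < edge_len d e} < card S"
    "pairwise (\<lambda>s t. \<epsilon> < d s t) S"
    by (rule MST_long_edges_separated[OF assms False])
  have "pairwise (\<lambda>s t. 2 * (\<epsilon> / 2) \<le> d s t) S"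
    using S(3) by (rule pairwise_mono) auto
  then have "enat (card S) \<le> packing_number M d (\<epsilon> / 2)"
    using S(1) P finite_subset by (intro card_le_packing_number_if_separated) auto
  with S(2) show ?thesis
    by (meson enat_ord_simps(1) less_imp_le order_trans)
qed

lemma dim_Box_nonneg:
  assumes "M \<noteq> {}"
  shows "0 \<le> dim_Box M d"
proof -
  obtain x where "x \<in> M"
    using assms by blast
  then have packing: "enat 1 \<le> packing_number M d r" for r
    using card_le_packing_number_if_separated[of "{x}" r] by simp
  have "0 \<le> box_ratio M d r" if "0 < r" "r < 1" for r
  proof (cases "packing_number M d r")
    case (enat n)
    with packing[of r] have "1 \<le> n"
      by simp
    with that enat show ?thesis
      unfolding box_ratio_def by simp
  qed (simp add: box_ratio_def)
  then have "\<forall>\<^sub>F r in at_right 0. 0 \<le> box_ratio M d r"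
    unfolding eventually_at_right_field by (intro exI[of _ 1]) simp
  then show ?thesis
    unfolding dim_Box_def by (intro le_Limsup) simp_all
qed

lemma mbounded_if_packing_number_finite:
  assumes "0 < r" "packing_number M d r \<noteq> \<infinity>"
  shows "mbounded M"
proof -
  define packing where
    "packing S \<longleftrightarrow> finite S \<and> S \<subseteq> M \<and> pairwise (\<lambda>x y. disjnt (mball x r) (mball y r)) S"
    for S
  obtain n where n: "packing_number M d r = enat n"
    using assms(2) by auto
  have "enat (card S) \<le> packing_number M d r" if "packing S" for S
    using that unfolding packing_number_def packing_def by (intro Sup_upper) blast
  with n have "\<forall>S. packing S \<longrightarrow> card S < Suc n"
    by (simp add: less_Suc_eq_le)
  moreover have "packing {}"
    unfolding packing_def by simp
  ultimately obtain S where S: "packing S" and max: "\<And>S'. packing S' \<Longrightarrow> card S' \<le> card S"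
    using ex_has_greatest_nat[of packing "{}" card "Suc n"] by blast
  have "M \<subseteq> (\<Union>s\<in>S. mball s (2 * r))"
  proof
    fix x
    assume x: "x \<in> M"
    show "x \<in> (\<Union>s\<in>S. mball s (2 * r))"
    proof (rule ccontr)
      assume far: "x \<notin> (\<Union>s\<in>S. mball s (2 * r))"
      then have "x \<notin> S"
        using x assms(1) centre_in_mball_iff by fastforce
      have "disjnt (mball s r) (mball x r)" if "s \<in> S" for s
      proof (rule disjoint_mball)
        show "r + r \<le> d s x"
          using far that x S unfolding packing_def by (auto simp: not_less)
      qed
      then have "packing (insert x S)"
        using S x unfolding packing_def pairwise_insert by (simp add: disjnt_sym)
      then have "card (insert x S) \<le> card S"
        by (rule max)
      with S \<open>x \<notin> S\<close> show False
        unfolding packing_def by simp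
    qed
  qed
  moreover have "mbounded (\<Union>s\<in>S. mball s (2 * r))"
    using S unfolding packing_def by (intro mbounded_Union) auto
  ultimately show ?thesis
    by (rule mbounded_subset[rotated])
qed

lemma spanning_tree_edge_len_le:
  assumes "P \<subseteq> M" "spanning_tree P T" "e \<in> T" "\<And>x y. x \<in> M \<Longrightarrow> y \<in> M \<Longrightarrow> d x y \<le> B"
  shows "edge_len d e \<le> B"
proof -
  obtain x y where xy: "e = {x, y}" "x \<in> P" "y \<in> P"
    using spanning_tree_edge[OF assms(2,3)] by metis
  with assms(1) have "x \<in> M" "y \<in> M"
    by auto
  with xy(1) show ?thesis
    using edge_len_doubleton assms(4) by simp
qed

lemma card_MST_long_edges_le_powr:
  assumes "is_MST M d P T" "0 < \<epsilon>" "\<epsilon> < 2" "box_ratio M d (\<epsilon> / 2) < ereal \<alpha>"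
  shows "real (card {e\<in>T. \<epsilon> < edge_len d e}) \<le> 2 powr \<alpha> * \<epsilon> powr (- \<alpha>)"
proof -
  have "real (card {e\<in>T. \<epsilon> < edge_len d e}) \<le> (\<epsilon> / 2) powr (- \<alpha>)"
    using assms card_MST_long_edges_le_packing_number[OF assms(1)]
    by (intro le_powr_if_box_ratio_less) auto
  also have "\<dots> = 2 powr \<alpha> * \<epsilon> powr (- \<alpha>)"
    using assms(2) by (simp add: powr_divide powr_minus_divide)
  finally show ?thesis .
qed

lemma MST_energy_bounded:
  assumes "M \<noteq> {}" "dim_Box M d < ereal \<beta>"
  shows "\<exists>C. \<forall>P T. is_MST M d P T \<longrightarrow> tree_energy d \<beta> T \<le> C"
proof -
  obtain \<alpha> where \<alpha>: "dim_Box M d < ereal \<alpha>" "\<alpha> < \<beta>"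
    using ereal_dense2[OF assms(2)] by auto
  have "0 \<le> \<alpha>"
    using order.strict_trans1[OF dim_Box_nonneg[OF assms(1)] \<alpha>(1)] by simp
  obtain r0 where r0: "0 < r0" and ratio: "\<And>r. 0 < r \<Longrightarrow> r < r0 \<Longrightarrow> box_ratio M d r < ereal \<alpha>"
    using Limsup_lessD[OF \<alpha>(1)[unfolded dim_Box_def]] unfolding eventually_at_right_field by auto
  define c where "c = min r0 1"
  have c: "0 < c" "c \<le> r0" "c \<le> 1"
    using r0 by (auto simp: c_def)
  have "packing_number M d (c / 2) \<noteq> \<infinity>"
    using ratio[of "c / 2"] c unfolding box_ratio_def by (cases "packing_number M d (c / 2)") auto
  then have "mbounded M"
    using c by (intro mbounded_if_packing_number_finite) auto
  then obtain B where B: "\<And>x y. x \<in> M \<Longrightarrow> y \<in> M \<Longrightarrow> d x y \<le> B"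
    unfolding mbounded_alt by blast
  have "tree_energy d \<beta> T \<le> 2 powr \<alpha> * c powr (- \<alpha>) * B powr \<beta> +
      2 powr \<alpha> * 2 powr \<alpha> * c powr (\<beta> - \<alpha>) / (1 - 2 powr (\<alpha> - \<beta>))"
    if MST: "is_MST M d P T" for P T
  proof -
    have P: "finite P" "P \<subseteq> M" and st: "spanning_tree P T"
      using MST unfolding is_MST_def by auto
    then have eg: "edge_graph P T"
      unfolding spanning_tree_def by (elim conjE)
    have "0 < edge_len d e \<and> edge_len d e \<le> B" if "e \<in> T" for e
      using edge_len_pos[OF P(2) eg that] spanning_tree_edge_len_le[OF P(2) st that B] by blast
    moreover have "real (card {e\<in>T. \<epsilon> < edge_len d e}) \<le> 2 powr \<alpha> * \<epsilon> powr (- \<alpha>)"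
      if "0 < \<epsilon>" "\<epsilon> \<le> c" for \<epsilon>
      using that c ratio[of "\<epsilon> / 2"] by (intro card_MST_long_edges_le_powr[OF MST]) auto
    ultimately show ?thesis
      unfolding tree_energy_def
      by (rule sum_powr_le_of_counting_bound[OF spanning_tree_finite[OF P(1) st] _ \<open>0 \<le> \<alpha>\<close> \<alpha>(2)
            _ c(1)])
  qed
  then show ?thesis
    by blast
qed

lemma dim_MST_le_dim_Box:
  assumes "M \<noteq> {}"
  shows "dim_MST M d \<le> dim_Box M d"
proof (rule dense_ge)
  fix y
  assume "dim_Box M d < y"
  then obtain \<beta> where \<beta>: "dim_Box M d < ereal \<beta>" "ereal \<beta> < y"
    using ereal_dense2 by blast
  have "0 \<le> \<beta>"
    using order.strict_trans1[OF dim_Box_nonneg[OF assms] \<beta>(1)] by simp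
  with MST_energy_bounded[OF assms \<beta>(1)] have "dim_MST M d \<le> ereal \<beta>"
    unfolding dim_MST_def by (intro Inf_lower) blast
  with \<beta>(2) show "dim_MST M d \<le> y"
    by simp
qed

end

theorem lemma6:
  fixes M :: "'a set" and d :: "'a \<Rightarrow> 'a \<Rightarrow> real"
  assumes "Metric_space M d" and "M \<noteq> {}"
  shows "dim_MST M d \<le> dim_Box M d \<and>
         (\<forall>\<beta>::real. dim_Box M d < ereal \<beta> \<longrightarrow>
            (\<exists>C. \<forall>P T. is_MST M d P T \<longrightarrow> tree_energy d \<beta> T \<le> C))"
  using Metric_space.dim_MST_le_dim_Box[OF assms] Metric_space.MST_energy_bounded[OF assms]
  by blast

end
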